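(* For every profile $P$: $|\mathit{TC}(P)|=2$ if and only if all but two agents have distinct top choices (there are distinct agents $x,y$ with the same top choice $p$, and the top choices of the agents in $N\setminus\{y\}$ are pairwise distinct) and these two agents $x,y$ also share the same second-best house $q$, which is not top-ranked by any agent. Analogously, $|\mathit{BC}(P)|=2$ if and only if all but two agents have distinct bottom choices (there are distinct agents $x,y$ with the same last-ranked house $p$, and the last-ranked houses of the agents in $N\setminus\{y\}$ are pairwise distinct) and these two agents share the same second-worst house $q$, which is not bottom-ranked by any agent.
   Context: Let $N=\{1,\dots,n\}$ be agents and $H$ a set of $n$ houses. A profile $P=(\succ_1,\dots,\succ_n)$ gives each agent a strict linear order on $H$; an agent's top (bottom) choice is the house she ranks first (last). An assignment is a bijection $N\to H$; $M$ is the set of assignments. Agent $x$ weakly prefers $\mu$ to $\lambda$ if $\mu(x)\succ_x\lambda(x)$ or $\mu(x)=\lambda(x)$. $N_{\mu,\lambda}$ is the set of agents weakly preferring $\mu$ to $\lambda$; $\mu\succsim\lambda$ if $|N_{\mu,\lambda}|\ge|N_{\lambda,\mu}|$, and $\succsim^*$ is its transitive closure. $\mathit{TC}(P)=\{\mu\in M:\mu\succsim^*\lambda\ \forall\lambda\in M\}$, $\mathit{BC}(P)=\{\mu\in M:\lambda\succsim^*\mu\ \forall\lambda\in M\}$. *)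

theory Defs
  imports Main "HOL-Library.FuncSet"
begin

(* A preference is a strict linear order r on the house set H: (a,b) \<in> r means a is strictly preferred to b. *)
definition is_pref :: "'h set \<Rightarrow> ('h \<times> 'h) set \<Rightarrow> bool" where
  "is_pref H r \<longleftrightarrow> strict_linear_order_on H r \<and> r \<subseteq> H \<times> H"

definition is_profile :: "'a set \<Rightarrow> 'h set \<Rightarrow> ('a \<Rightarrow> ('h \<times> 'h) set) \<Rightarrow> bool" where
  "is_profile N H P \<longleftrightarrow> (\<forall>x\<in>N. is_pref H (P x))"

definition assignments :: "'a set \<Rightarrow> 'h set \<Rightarrow> ('a \<Rightarrow> 'h) set" where
  "assignments N H = {\<mu> \<in> extensional N. bij_betw \<mu> N H}"

definition weak_pref_agents :: "'a set \<Rightarrow> ('a \<Rightarrow> ('h \<times> 'h) set) \<Rightarrow> ('a \<Rightarrow> 'h) \<Rightarrow> ('a \<Rightarrow> 'h) \<Rightarrow> 'a set" where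
  "weak_pref_agents N P \<mu> \<nu> = {x \<in> N. (\<mu> x, \<nu> x) \<in> P x \<or> \<mu> x = \<nu> x}"

definition pop_rel :: "'a set \<Rightarrow> 'h set \<Rightarrow> ('a \<Rightarrow> ('h \<times> 'h) set) \<Rightarrow> (('a \<Rightarrow> 'h) \<times> ('a \<Rightarrow> 'h)) set" where
  "pop_rel N H P = {(\<mu>, \<nu>). \<mu> \<in> assignments N H \<and> \<nu> \<in> assignments N H \<and>
      card (weak_pref_agents N P \<mu> \<nu>) \<ge> card (weak_pref_agents N P \<nu> \<mu>)}"

definition TC :: "'a set \<Rightarrow> 'h set \<Rightarrow> ('a \<Rightarrow> ('h \<times> 'h) set) \<Rightarrow> ('a \<Rightarrow> 'h) set" where
  "TC N H P = {\<mu> \<in> assignments N H. \<forall>\<nu> \<in> assignments N H. (\<mu>, \<nu>) \<in> (pop_rel N H P)\<^sup>+}"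

definition BC :: "'a set \<Rightarrow> 'h set \<Rightarrow> ('a \<Rightarrow> ('h \<times> 'h) set) \<Rightarrow> ('a \<Rightarrow> 'h) set" where
  "BC N H P = {\<mu> \<in> assignments N H. \<forall>\<nu> \<in> assignments N H. (\<nu>, \<mu>) \<in> (pop_rel N H P)\<^sup>+}"

definition first_choice :: "'h set \<Rightarrow> ('h \<times> 'h) set \<Rightarrow> 'h" where
  "first_choice H r = (THE h. h \<in> H \<and> (\<forall>h'\<in>H. h' \<noteq> h \<longrightarrow> (h, h') \<in> r))"

definition second_choice :: "'h set \<Rightarrow> ('h \<times> 'h) set \<Rightarrow> 'h" where
  "second_choice H r = (THE h. h \<in> H \<and> h \<noteq> first_choice H r \<and>
       (\<forall>h'\<in>H - {first_choice H r, h}. (h, h') \<in> r))"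

definition last_choice :: "'h set \<Rightarrow> ('h \<times> 'h) set \<Rightarrow> 'h" where
  "last_choice H r = first_choice H (r\<inverse>)"

definition second_last_choice :: "'h set \<Rightarrow> ('h \<times> 'h) set \<Rightarrow> 'h" where
  "second_last_choice H r = second_choice H (r\<inverse>)"

end

theory Submission
  imports Defs "HOL-Combinatorics.Transposition"
begin

text \<open>Swapping houses with an agent whose house one prefers gives a weakly more popular
  assignment, so the top cycle is closed under such improving swaps. If the top cycle is
  \<open>{\<mu>, \<mu>'}\<close>, every improving swap from \<open>\<mu>\<close> must produce \<open>\<mu>'\<close>; hence exactly one agent
  \<open>x\<close> misses her top house under \<open>\<mu>\<close>, it is held by an agent \<open>y\<close> with the same top house,
  \<open>\<mu>'\<close> swaps the two, and \<open>\<mu> x\<close> is the second house of \<open>x\<close>, since a house in between would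
  allow a third improving swap; by symmetry it is also the second house of \<open>y\<close>. Conversely,
  the assignment giving every agent but \<open>y\<close> her top house and \<open>y\<close> the common second house
  weakly beats every assignment and strictly beats all but its swap with \<open>x\<close>, so it forms
  the top cycle together with that swap. The bottom cycle is the top cycle of the reversed
  profile.\<close>


section \<open>Preferences\<close>

lemma is_pref_irrefl: "is_pref H r \<Longrightarrow> (a, a) \<notin> r"
  by (auto simp: is_pref_def strict_linear_order_on_def irrefl_def)

lemma is_pref_asym: "is_pref H r \<Longrightarrow> (a, b) \<in> r \<Longrightarrow> (b, a) \<notin> r"
  unfolding is_pref_def strict_linear_order_on_def irrefl_def trans_def by blast

lemma is_pref_total:
  "is_pref H r \<Longrightarrow> a \<in> H \<Longrightarrow> b \<in> H \<Longrightarrow> a \<noteq> b \<Longrightarrow> (a, b) \<in> r \<or> (b, a) \<in> r"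
  unfolding is_pref_def strict_linear_order_on_def total_on_def by blast

lemma is_pref_converse: "is_pref H r \<Longrightarrow> is_pref H (r\<inverse>)"
  unfolding is_pref_def strict_linear_order_on_def
  by (auto simp: trans_def irrefl_def total_on_def)

lemma is_profile_converse: "is_profile N H P \<Longrightarrow> is_profile N H (\<lambda>x. (P x)\<inverse>)"
  unfolding is_profile_def by (simp add: is_pref_converse)

lemma is_profile_irrefl: "is_profile N H P \<Longrightarrow> \<forall>x\<in>N. irrefl (P x)"
  by (simp add: is_profile_def is_pref_def strict_linear_order_on_def)

lemma is_pref_has_best:
  assumes r: "is_pref H r" and "finite H" and "A \<subseteq> H" "A \<noteq> {}"
  obtains m where "m \<in> A" "\<forall>h\<in>A - {m}. (m, h) \<in> r"
proof -
  have "finite r"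
    using r \<open>finite H\<close> unfolding is_pref_def by (meson finite_SigmaI finite_subset)
  moreover have "acyclic r"
    using r unfolding is_pref_def strict_linear_order_on_def by (simp add: acyclic_irrefl)
  ultimately have "wf r" by (rule finite_acyclic_wf)
  obtain a where "a \<in> A"
    using \<open>A \<noteq> {}\<close> by blast
  then obtain m where m: "m \<in> A" "\<And>h. (h, m) \<in> r \<Longrightarrow> h \<notin> A"
    using wfE_min[OF \<open>wf r\<close>] by blast
  show thesis
  proof (rule that[OF \<open>m \<in> A\<close>], rule ballI)
    fix h assume "h \<in> A - {m}"
    then show "(m, h) \<in> r"
      using is_pref_total[OF r, of m h] m \<open>A \<subseteq> H\<close> by blast
  qed
qed

lemma first_choice_eqI:
  assumes r: "is_pref H r" and "m \<in> H" and best: "\<forall>h\<in>H - {m}. (m, h) \<in> r"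
  shows "first_choice H r = m"
  unfolding first_choice_def
proof (rule the_equality)
  show "m \<in> H \<and> (\<forall>h\<in>H. h \<noteq> m \<longrightarrow> (m, h) \<in> r)"
    using assms by blast
next
  fix m' assume m': "m' \<in> H \<and> (\<forall>h\<in>H. h \<noteq> m' \<longrightarrow> (m', h) \<in> r)"
  show "m' = m"
  proof (rule ccontr)
    assume "m' \<noteq> m"
    then have "(m', m) \<in> r" "(m, m') \<in> r"
      using m' best \<open>m \<in> H\<close> by auto
    then show False
      using is_pref_asym[OF r] by blast
  qed
qed

lemma first_choice:
  assumes r: "is_pref H r" and "finite H" and "H \<noteq> {}"
  shows "first_choice H r \<in> H" and "\<forall>h\<in>H - {first_choice H r}. (first_choice H r, h) \<in> r"
proof -
  obtain m where "m \<in> H" "\<forall>h\<in>H - {m}. (m, h) \<in> r"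
    by (rule is_pref_has_best[OF r \<open>finite H\<close> order_refl \<open>H \<noteq> {}\<close>])
  moreover from this have "first_choice H r = m"
    using first_choice_eqI[OF r] by blast
  ultimately show "first_choice H r \<in> H" "\<forall>h\<in>H - {first_choice H r}. (first_choice H r, h) \<in> r"
    by simp_all
qed

lemma first_choice_unbeaten:
  assumes r: "is_pref H r" and "finite H" and "H \<noteq> {}"
  shows "(h, first_choice H r) \<notin> r"
proof
  assume h: "(h, first_choice H r) \<in> r"
  then have "h \<in> H - {first_choice H r}"
    using r is_pref_irrefl[OF r] unfolding is_pref_def by fast
  then show False
    using first_choice(2)[OF assms] is_pref_asym[OF r h] by blast
qed

lemma second_choice_eqI:
  assumes r: "is_pref H r" and "q \<in> H - {first_choice H r}"
    and best: "\<forall>h\<in>H - {first_choice H r, q}. (q, h) \<in> r"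
  shows "second_choice H r = q"
  unfolding second_choice_def
proof (rule the_equality)
  show "q \<in> H \<and> q \<noteq> first_choice H r \<and> (\<forall>h\<in>H - {first_choice H r, q}. (q, h) \<in> r)"
    using assms by blast
next
  fix q' assume q': "q' \<in> H \<and> q' \<noteq> first_choice H r \<and> (\<forall>h\<in>H - {first_choice H r, q'}. (q', h) \<in> r)"
  show "q' = q"
  proof (rule ccontr)
    assume "q' \<noteq> q"
    then have "(q', q) \<in> r" "(q, q') \<in> r"
      using q' best \<open>q \<in> H - {first_choice H r}\<close> by auto
    then show False
      using is_pref_asym[OF r] by blast
  qed
qed

lemma second_choice:
  assumes r: "is_pref H r" and "finite H" and "a \<in> H" "b \<in> H" "a \<noteq> b"
  shows "second_choice H r \<in> H - {first_choice H r}"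
    and "\<forall>h\<in>H - {first_choice H r, second_choice H r}. (second_choice H r, h) \<in> r"
proof -
  have "H - {first_choice H r} \<noteq> {}"
    using assms by blast
  then obtain q where q: "q \<in> H - {first_choice H r}" "\<forall>h\<in>H - {first_choice H r} - {q}. (q, h) \<in> r"
    by (rule is_pref_has_best[OF r \<open>finite H\<close> Diff_subset])
  have "H - {first_choice H r} - {q} = H - {first_choice H r, q}"
    by blast
  with q have "second_choice H r = q"
    using second_choice_eqI[OF r] by simp
  with q \<open>H - {first_choice H r} - {q} = H - {first_choice H r, q}\<close>
  show "second_choice H r \<in> H - {first_choice H r}"
    and "\<forall>h\<in>H - {first_choice H r, second_choice H r}. (second_choice H r, h) \<in> r"
    by simp_all
qed

section \<open>Popularity and the top cycle\<close>

definition strict_pref_agents :: "'a set \<Rightarrow> ('a \<Rightarrow> ('h \<times> 'h) set) \<Rightarrow> ('a \<Rightarrow> 'h) \<Rightarrow> ('a \<Rightarrow> 'h) \<Rightarrow> 'a set" where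
  "strict_pref_agents N P \<mu> \<nu> = {x \<in> N. (\<mu> x, \<nu> x) \<in> P x}"

lemma finite_strict_pref_agents: "finite N \<Longrightarrow> finite (strict_pref_agents N P \<mu> \<nu>)"
  unfolding strict_pref_agents_def by simp

text \<open>Agents who receive the same house under both assignments count on both sides.\<close>

lemma pop_rel_iff:
  assumes "finite N" and irr: "\<forall>x\<in>N. irrefl (P x)"
  shows "(\<mu>, \<nu>) \<in> pop_rel N H P \<longleftrightarrow> \<mu> \<in> assignments N H \<and> \<nu> \<in> assignments N H \<and>
    card (strict_pref_agents N P \<nu> \<mu>) \<le> card (strict_pref_agents N P \<mu> \<nu>)"
proof -
  have split: "weak_pref_agents N P \<alpha> \<beta> = {x \<in> N. \<alpha> x = \<beta> x} \<union> strict_pref_agents N P \<alpha> \<beta>"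
    and disjoint: "{x \<in> N. \<alpha> x = \<beta> x} \<inter> strict_pref_agents N P \<alpha> \<beta> = {}" for \<alpha> \<beta>
    using irr by (auto simp: weak_pref_agents_def strict_pref_agents_def irrefl_def)
  have "card (weak_pref_agents N P \<alpha> \<beta>) = card {x \<in> N. \<alpha> x = \<beta> x} + card (strict_pref_agents N P \<alpha> \<beta>)"
    for \<alpha> \<beta>
    unfolding split using \<open>finite N\<close> disjoint
    by (simp add: card_Un_disjoint finite_strict_pref_agents)
  moreover have "{x \<in> N. \<nu> x = \<mu> x} = {x \<in> N. \<mu> x = \<nu> x}"
    by auto
  ultimately show ?thesis
    unfolding pop_rel_def by auto
qed

lemma weak_pref_agents_converse:
  "weak_pref_agents N (\<lambda>x. (P x)\<inverse>) \<mu> \<nu> = weak_pref_agents N P \<nu> \<mu>"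
  unfolding weak_pref_agents_def by auto

lemma pop_rel_converse: "pop_rel N H (\<lambda>x. (P x)\<inverse>) = (pop_rel N H P)\<inverse>"
  unfolding pop_rel_def weak_pref_agents_converse by auto

lemma BC_eq_TC_converse: "BC N H P = TC N H (\<lambda>x. (P x)\<inverse>)"
  unfolding BC_def TC_def pop_rel_converse trancl_converse by auto

lemma TC_pop_rel_closed:
  assumes "\<rho> \<in> TC N H P" and "(\<kappa>, \<rho>) \<in> pop_rel N H P"
  shows "\<kappa> \<in> TC N H P"
proof -
  have "\<kappa> \<in> assignments N H"
    using assms(2) unfolding pop_rel_def by blast
  then show ?thesis
    using assms unfolding TC_def by (blast intro: trancl_into_trancl2)
qed

lemma TC_subset_singleton:
  assumes "\<rho> \<in> assignments N H" and only: "\<And>\<kappa>. (\<kappa>, \<rho>) \<in> pop_rel N H P \<Longrightarrow> \<kappa> = \<rho>"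
  shows "TC N H P \<subseteq> {\<rho>}"
proof
  fix \<kappa> assume "\<kappa> \<in> TC N H P"
  then have "(\<kappa>, \<rho>) \<in> (pop_rel N H P)\<^sup>+"
    using assms(1) unfolding TC_def by blast
  then have "\<kappa> = \<rho>"
    by (induction rule: converse_trancl_induct) (auto dest: only)
  then show "\<kappa> \<in> {\<rho>}" by simp
qed

lemma TC_eqI:
  assumes "D \<noteq> {}" and D: "D \<subseteq> assignments N H"
    and beats_all: "\<And>\<delta> \<nu>. \<delta> \<in> D \<Longrightarrow> \<nu> \<in> assignments N H \<Longrightarrow> (\<delta>, \<nu>) \<in> pop_rel N H P"
    and beats_strictly: "\<And>\<delta> \<nu>. \<delta> \<in> D \<Longrightarrow> \<nu> \<in> assignments N H - D \<Longrightarrow> (\<nu>, \<delta>) \<notin> pop_rel N H P"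
  shows "TC N H P = D"
proof
  show "D \<subseteq> TC N H P"
    using D beats_all unfolding TC_def by blast
next
  have outside_closed: "\<beta> \<in> assignments N H - D"
    if "\<alpha> \<in> assignments N H - D" "(\<alpha>, \<beta>) \<in> pop_rel N H P" for \<alpha> \<beta>
    using that beats_strictly unfolding pop_rel_def by blast
  show "TC N H P \<subseteq> D"
  proof
    fix \<kappa> assume \<kappa>: "\<kappa> \<in> TC N H P"
    obtain \<delta> where "\<delta> \<in> D"
      using \<open>D \<noteq> {}\<close> by blast
    then have reach: "(\<kappa>, \<delta>) \<in> (pop_rel N H P)\<^sup>+"
      using \<kappa> D unfolding TC_def by blast
    show "\<kappa> \<in> D"
    proof (rule ccontr)
      assume "\<kappa> \<notin> D"
      then have "\<kappa> \<in> assignments N H - D"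
        using \<kappa> unfolding TC_def by blast
      have "\<beta> \<in> assignments N H - D" if "(\<kappa>, \<beta>) \<in> (pop_rel N H P)\<^sup>+" for \<beta>
        using that
        by (induction rule: trancl_induct) (use outside_closed \<open>\<kappa> \<in> assignments N H - D\<close> in blast)+
      then have "\<delta> \<in> assignments N H - D"
        using reach by blast
      then show False
        using \<open>\<delta> \<in> D\<close> by blast
    qed
  qed
qed

section \<open>Assignments and swaps\<close>

lemma assignment_in: "\<mu> \<in> assignments N H \<Longrightarrow> z \<in> N \<Longrightarrow> \<mu> z \<in> H"
  unfolding assignments_def by (auto dest: bij_betw_apply)

lemma assignment_eq_iff: "\<mu> \<in> assignments N H \<Longrightarrow> a \<in> N \<Longrightarrow> b \<in> N \<Longrightarrow> \<mu> a = \<mu> b \<longleftrightarrow> a = b"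
  unfolding assignments_def by (auto dest: bij_betw_imp_inj_on inj_onD)

lemma assignment_holder:
  assumes "\<mu> \<in> assignments N H" and "h \<in> H"
  obtains c where "c \<in> N" and "\<mu> c = h"
  using assms unfolding assignments_def bij_betw_def by blast

lemma assignment_eqI:
  "\<mu> \<in> assignments N H \<Longrightarrow> \<nu> \<in> assignments N H \<Longrightarrow> (\<And>z. z \<in> N \<Longrightarrow> \<mu> z = \<nu> z) \<Longrightarrow> \<mu> = \<nu>"
  unfolding assignments_def by (blast intro: extensionalityI)

lemma assignmentsI:
  assumes "finite H" and "card N = card H"
    and "\<mu> \<in> extensional N" and "inj_on \<mu> N" and "\<mu> ` N \<subseteq> H"
  shows "\<mu> \<in> assignments N H"
proof -
  have "card (\<mu> ` N) = card H"
    using card_image[OF \<open>inj_on \<mu> N\<close>] \<open>card N = card H\<close> by simp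
  then have "\<mu> ` N = H"
    using card_subset_eq[OF \<open>finite H\<close> \<open>\<mu> ` N \<subseteq> H\<close>] by blast
  then show ?thesis
    using assms unfolding assignments_def bij_betw_def by blast
qed

lemma assignment_swap:
  assumes "\<mu> \<in> assignments N H" and "a \<in> N" and "b \<in> N"
  shows "\<mu> \<circ> transpose a b \<in> assignments N H"
proof -
  have "bij_betw (\<mu> \<circ> transpose a b) N H"
    using assms bij_betw_trans[of "transpose a b" N N \<mu> H] unfolding assignments_def by simp
  moreover have "\<mu> \<circ> transpose a b \<in> extensional N"
    using assms unfolding assignments_def extensional_def by (auto simp: transpose_def)
  ultimately show ?thesis
    unfolding assignments_def by blast
qed

text \<open>The swap wins the vote of \<open>z\<close> and can lose at most that of \<open>w\<close>.\<close>

lemma swap_pop_rel: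
  assumes "finite N" and profile: "is_profile N H P" and \<rho>: "\<rho> \<in> assignments N H"
    and "z \<in> N" and "w \<in> N" and better: "(\<rho> w, \<rho> z) \<in> P z"
  shows "(\<rho> \<circ> transpose z w, \<rho>) \<in> pop_rel N H P"
proof -
  have pref: "is_pref H (P x)" if "x \<in> N" for x
    using profile that unfolding is_profile_def by blast
  have "z \<in> strict_pref_agents N P (\<rho> \<circ> transpose z w) \<rho>"
    using \<open>z \<in> N\<close> better unfolding strict_pref_agents_def by simp
  then have "1 \<le> card (strict_pref_agents N P (\<rho> \<circ> transpose z w) \<rho>)"
    using finite_strict_pref_agents[OF \<open>finite N\<close>] by (metis One_nat_def Suc_leI card_gt_0_iff empty_iff)
  moreover have "strict_pref_agents N P \<rho> (\<rho> \<circ> transpose z w) \<subseteq> {w}"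
    using is_pref_asym[OF pref[OF \<open>z \<in> N\<close>] better] is_pref_irrefl[OF pref]
    unfolding strict_pref_agents_def by (auto simp: transpose_def)
  then have "card (strict_pref_agents N P \<rho> (\<rho> \<circ> transpose z w)) \<le> 1"
    using card_mono[of "{w}"] by fastforce
  ultimately show ?thesis
    using pop_rel_iff[OF \<open>finite N\<close> is_profile_irrefl[OF profile]]
      \<rho> assignment_swap[OF \<rho> \<open>z \<in> N\<close> \<open>w \<in> N\<close>] by simp
qed

locale housing_market =
  fixes N :: "'a set" and H :: "'h set" and P :: "'a \<Rightarrow> ('h \<times> 'h) set"
  assumes finite_agents: "finite N" and finite_houses: "finite H"
    and card_agents_houses: "card N = card H" and profile: "is_profile N H P"
begin

abbreviation top_house :: "'a \<Rightarrow> 'h" where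
  "top_house z \<equiv> first_choice H (P z)"

abbreviation second_house :: "'a \<Rightarrow> 'h" where
  "second_house z \<equiv> second_choice H (P z)"

lemma pref: "z \<in> N \<Longrightarrow> is_pref H (P z)"
  using profile unfolding is_profile_def by blast

lemma pop_rel_iff_card:
  "(\<mu>, \<nu>) \<in> pop_rel N H P \<longleftrightarrow> \<mu> \<in> assignments N H \<and> \<nu> \<in> assignments N H \<and>
    card (strict_pref_agents N P \<nu> \<mu>) \<le> card (strict_pref_agents N P \<mu> \<nu>)"
  by (rule pop_rel_iff[OF finite_agents is_profile_irrefl[OF profile]])

lemma two_houses:
  assumes "z \<in> N" and "w \<in> N" and "z \<noteq> w"
  obtains a b where "a \<in> H" and "b \<in> H" and "a \<noteq> b"
proof -
  obtain f where "bij_betw f N H"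
    using finite_same_card_bij[OF finite_agents finite_houses card_agents_houses] by blast
  then show thesis
    using that assms by (metis bij_betw_apply bij_betw_imp_inj_on inj_on_contraD)
qed

lemma houses_nonempty: "z \<in> N \<Longrightarrow> H \<noteq> {}"
  using card_agents_houses finite_agents by force

lemma top_house_in: "z \<in> N \<Longrightarrow> top_house z \<in> H"
  using first_choice(1)[OF pref finite_houses houses_nonempty] .

lemma top_house_best: "z \<in> N \<Longrightarrow> h \<in> H \<Longrightarrow> h \<noteq> top_house z \<Longrightarrow> (top_house z, h) \<in> P z"
  using first_choice(2)[OF pref finite_houses houses_nonempty] by blast

lemma top_house_unbeaten: "z \<in> N \<Longrightarrow> (h, top_house z) \<notin> P z"
  using first_choice_unbeaten[OF pref finite_houses houses_nonempty] .

lemma second_house: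
  assumes "z \<in> N" and "w \<in> N" and "z \<noteq> w"
  shows "second_house z \<in> H - {top_house z}"
    and "\<forall>h\<in>H - {top_house z, second_house z}. (second_house z, h) \<in> P z"
proof -
  obtain a b where "a \<in> H" "b \<in> H" "a \<noteq> b"
    using two_houses[OF assms] .
  from second_choice[OF pref[OF \<open>z \<in> N\<close>] finite_houses this]
  show "second_house z \<in> H - {top_house z}"
    and "\<forall>h\<in>H - {top_house z, second_house z}. (second_house z, h) \<in> P z"
    by simp_all
qed

lemma second_house_eqI:
  "z \<in> N \<Longrightarrow> q \<in> H - {top_house z} \<Longrightarrow> \<forall>h\<in>H - {top_house z, q}. (q, h) \<in> P z \<Longrightarrow> second_house z = q"
  by (rule second_choice_eqI[OF pref])

lemma TC_subset_if_all_top: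
  assumes \<rho>: "\<rho> \<in> assignments N H" and all_top: "\<forall>z\<in>N. \<rho> z = top_house z"
  shows "TC N H P \<subseteq> {\<rho>}"
proof (rule TC_subset_singleton[OF \<rho>])
  fix \<kappa> assume \<kappa>\<rho>: "(\<kappa>, \<rho>) \<in> pop_rel N H P"
  then have \<kappa>: "\<kappa> \<in> assignments N H"
    using pop_rel_iff_card by blast
  have "strict_pref_agents N P \<kappa> \<rho> = {}"
    using all_top top_house_unbeaten unfolding strict_pref_agents_def by auto
  then have "card (strict_pref_agents N P \<rho> \<kappa>) = 0"
    using \<kappa>\<rho> pop_rel_iff_card by simp
  then have no_agent_prefers: "strict_pref_agents N P \<rho> \<kappa> = {}"
    by (simp add: finite_strict_pref_agents[OF finite_agents])
  have "\<kappa> z = \<rho> z" if "z \<in> N" for z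
  proof (rule ccontr)
    assume "\<kappa> z \<noteq> \<rho> z"
    then have "(\<rho> z, \<kappa> z) \<in> P z"
      using top_house_best[OF that assignment_in[OF \<kappa> that]] all_top that by auto
    then have "z \<in> strict_pref_agents N P \<rho> \<kappa>"
      using that unfolding strict_pref_agents_def by simp
    then show False
      using no_agent_prefers by simp
  qed
  then show "\<kappa> = \<rho>"
    by (rule assignment_eqI[OF \<kappa> \<rho>])
qed

lemma swap_in_TC:
  "\<rho> \<in> TC N H P \<Longrightarrow> z \<in> N \<Longrightarrow> w \<in> N \<Longrightarrow> (\<rho> w, \<rho> z) \<in> P z \<Longrightarrow> \<rho> \<circ> transpose z w \<in> TC N H P"
  using TC_pop_rel_closed swap_pop_rel[OF finite_agents profile] unfolding TC_def by blast

end

section \<open>Top cycles of size two\<close>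

locale two_top_cycle = housing_market +
  fixes \<mu> \<mu>'
  assumes TC_eq: "TC N H P = {\<mu>, \<mu>'}" and distinct: "\<mu> \<noteq> \<mu>'"
begin

lemma swapped: "two_top_cycle N H P \<mu>' \<mu>"
  using TC_eq distinct by unfold_locales (auto simp: insert_commute)

lemma assignments: "\<mu> \<in> assignments N H" "\<mu>' \<in> assignments N H"
  using TC_eq unfolding TC_def by blast+

lemma improving_swap_eq:
  assumes "z \<in> N" and "w \<in> N" and better: "(\<mu> w, \<mu> z) \<in> P z"
  shows "\<mu>' = \<mu> \<circ> transpose z w"
proof -
  have "\<mu> \<circ> transpose z w \<in> TC N H P"
    using swap_in_TC TC_eq assms by blast
  moreover have "\<mu> \<circ> transpose z w \<noteq> \<mu>"
    using better is_pref_irrefl[OF pref[OF \<open>z \<in> N\<close>]] by (metis comp_apply transpose_apply_first)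
  ultimately show ?thesis
    using TC_eq by blast
qed

lemma improving_swap_partner_unique:
  assumes "z \<in> N" "w \<in> N" "w' \<in> N" and "(\<mu> w, \<mu> z) \<in> P z" "(\<mu> w', \<mu> z) \<in> P z"
  shows "w = w'"
proof -
  have "(\<mu> \<circ> transpose z w) z = (\<mu> \<circ> transpose z w') z"
    using improving_swap_eq assms by metis
  then show ?thesis
    using assignment_eq_iff[OF assignments(1) \<open>w \<in> N\<close> \<open>w' \<in> N\<close>] by simp
qed

lemma exists_not_top: "\<exists>a\<in>N. \<mu> a \<noteq> top_house a"
  using TC_subset_if_all_top[OF assignments(1)] TC_eq distinct by blast

lemma not_top_gets_top:
  assumes "z \<in> N" and "\<mu> z \<noteq> top_house z"
  shows "\<mu>' z = top_house z"
proof -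
  obtain w where "w \<in> N" and w: "\<mu> w = top_house z"
    using assignment_holder[OF assignments(1) top_house_in[OF \<open>z \<in> N\<close>]] .
  then have "\<mu>' = \<mu> \<circ> transpose z w"
    using improving_swap_eq top_house_best assignment_in assignments(1) assms by metis
  then show ?thesis
    using w by simp
qed

lemma pair_is_top_swap:
  obtains a b where "a \<in> N" "b \<in> N" "a \<noteq> b" "\<mu>' = \<mu> \<circ> transpose a b"
    "\<mu> b = top_house a" "top_house b = top_house a" "\<forall>z\<in>N - {a}. \<mu> z = top_house z"
proof -
  obtain a where a: "a \<in> N" "\<mu> a \<noteq> top_house a"
    using exists_not_top by blast
  obtain b where b: "b \<in> N" "\<mu> b = top_house a"
    using assignment_holder[OF assignments(1) top_house_in[OF \<open>a \<in> N\<close>]] .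
  have "a \<noteq> b"
    using a b by blast
  have \<mu>': "\<mu>' = \<mu> \<circ> transpose a b"
    using improving_swap_eq[OF \<open>a \<in> N\<close> \<open>b \<in> N\<close>] top_house_best[OF \<open>a \<in> N\<close> assignment_in[OF assignments(1) \<open>a \<in> N\<close>]] a b
    by simp
  have others_top: "\<mu> z = top_house z" if "z \<in> N" "z \<noteq> a" "z \<noteq> b" for z
    using not_top_gets_top[OF \<open>z \<in> N\<close>] \<mu>' that by fastforce
  have "\<mu> b = top_house b"
  proof (rule ccontr)
    assume "\<mu> b \<noteq> top_house b"
    then have "\<forall>z\<in>N. \<mu>' z = top_house z"
      using not_top_gets_top a b others_top \<mu>' by (metis comp_apply transpose_apply_other)
    then have "TC N H P \<subseteq> {\<mu>'}"
      by (rule TC_subset_if_all_top[OF assignments(2)])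
    then show False
      using TC_eq distinct by blast
  qed
  then show thesis
    using that a b \<open>a \<noteq> b\<close> \<mu>' others_top by (metis Diff_iff insertI1)
qed

lemma second_house_eq_assigned:
  assumes "a \<in> N" "b \<in> N" "a \<noteq> b" and b: "\<mu> b = top_house a"
  shows "second_house a = \<mu> a"
proof (rule second_house_eqI[OF \<open>a \<in> N\<close>])
  have "\<mu> a \<noteq> \<mu> b"
    using assignment_eq_iff[OF assignments(1) \<open>a \<in> N\<close> \<open>b \<in> N\<close>] \<open>a \<noteq> b\<close> by blast
  then show \<mu>a: "\<mu> a \<in> H - {top_house a}"
    using b assignment_in[OF assignments(1) \<open>a \<in> N\<close>] by simp
  then have b_better: "(\<mu> b, \<mu> a) \<in> P a"
    using top_house_best[OF \<open>a \<in> N\<close>] b by simp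
  show "\<forall>h\<in>H - {top_house a, \<mu> a}. (\<mu> a, h) \<in> P a"
  proof
    fix h assume h: "h \<in> H - {top_house a, \<mu> a}"
    show "(\<mu> a, h) \<in> P a"
    proof (rule ccontr)
      assume "(\<mu> a, h) \<notin> P a"
      then have "(h, \<mu> a) \<in> P a"
        using is_pref_total[OF pref[OF \<open>a \<in> N\<close>]] h \<mu>a by blast
      moreover obtain c where "c \<in> N" "\<mu> c = h"
        using assignment_holder[OF assignments(1)] h by blast
      ultimately have "c = b"
        using improving_swap_partner_unique[OF \<open>a \<in> N\<close> _ \<open>b \<in> N\<close> _ b_better] by blast
      then show False
        using \<open>\<mu> c = h\<close> h b by blast
    qed
  qed
qed

end

locale almost_top_assignment = housing_market +
  fixes \<mu> x y
  assumes assignment: "\<mu> \<in> assignments N H"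
    and agents: "x \<in> N" "y \<in> N" "x \<noteq> y"
    and same_top: "top_house y = top_house x"
    and second_for_y: "\<mu> y = second_house y"
    and top_for_others: "\<forall>z\<in>N - {y}. \<mu> z = top_house z"
begin

lemma y_house_second_best: "\<mu> y \<in> H - {top_house x}" "\<forall>h\<in>H - {top_house x, \<mu> y}. (\<mu> y, h) \<in> P y"
  using second_house[OF agents(2,1)] agents(3) second_for_y same_top by auto

lemma only_y_prefers_other: "strict_pref_agents N P \<nu> \<mu> \<subseteq> {y}"
proof
  fix z assume "z \<in> strict_pref_agents N P \<nu> \<mu>"
  then have "z \<in> N" and better: "(\<nu> z, \<mu> z) \<in> P z"
    unfolding strict_pref_agents_def by auto
  show "z \<in> {y}"
  proof (rule ccontr)
    assume "z \<notin> {y}"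
    then have "\<mu> z = top_house z"
      using top_for_others \<open>z \<in> N\<close> by blast
    then show False
      using better top_house_unbeaten[OF \<open>z \<in> N\<close>] by simp
  qed
qed

lemma y_prefers_only_top:
  assumes "\<nu> \<in> assignments N H" and "y \<in> strict_pref_agents N P \<nu> \<mu>"
  shows "\<nu> y = top_house x"
proof (rule ccontr)
  assume "\<nu> y \<noteq> top_house x"
  have better: "(\<nu> y, \<mu> y) \<in> P y"
    using assms(2) unfolding strict_pref_agents_def by simp
  then have "\<nu> y \<noteq> \<mu> y"
    using is_pref_irrefl[OF pref[OF agents(2)]] by metis
  then have "(\<mu> y, \<nu> y) \<in> P y"
    using y_house_second_best(2) assignment_in[OF assms(1) agents(2)] \<open>\<nu> y \<noteq> top_house x\<close> by blast
  then show False
    using is_pref_asym[OF pref[OF agents(2)] better] by blast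
qed

lemma changed_agent_prefers_mu:
  assumes "\<nu> \<in> assignments N H" and "z \<in> N - {y}" and "\<nu> z \<noteq> \<mu> z"
  shows "z \<in> strict_pref_agents N P \<mu> \<nu>"
  using assms top_for_others top_house_best assignment_in unfolding strict_pref_agents_def by fastforce

lemma pop_rel_to_all:
  assumes \<nu>: "\<nu> \<in> assignments N H"
  shows "(\<mu>, \<nu>) \<in> pop_rel N H P"
proof -
  have "card (strict_pref_agents N P \<nu> \<mu>) \<le> card (strict_pref_agents N P \<mu> \<nu>)"
  proof (cases "y \<in> strict_pref_agents N P \<nu> \<mu>")
    case True
    then have "\<nu> y = \<mu> x"
      using y_prefers_only_top[OF \<nu>] top_for_others agents by simp
    then have "\<nu> x \<noteq> \<mu> x"
      using assignment_eq_iff[OF \<nu> agents(1,2)] agents(3) by simp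
    then have "x \<in> strict_pref_agents N P \<mu> \<nu>"
      using changed_agent_prefers_mu[OF \<nu>] agents by blast
    then have "1 \<le> card (strict_pref_agents N P \<mu> \<nu>)"
      using finite_strict_pref_agents[OF finite_agents] by (metis One_nat_def Suc_leI card_gt_0_iff empty_iff)
    moreover have "card (strict_pref_agents N P \<nu> \<mu>) \<le> 1"
      using card_mono[OF _ only_y_prefers_other] by fastforce
    ultimately show ?thesis by simp
  next
    case False
    then have "strict_pref_agents N P \<nu> \<mu> = {}"
      using only_y_prefers_other by blast
    then show ?thesis by simp
  qed
  then show ?thesis
    using pop_rel_iff_card assignment \<nu> by blast
qed

lemma another_agent_prefers_mu:
  assumes \<nu>: "\<nu> \<in> assignments N H" and "\<nu> y = \<mu> x" and "\<nu> \<noteq> \<mu> \<circ> transpose x y"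
  obtains c where "c \<in> strict_pref_agents N P \<mu> \<nu>" and "c \<noteq> x"
proof -
  obtain c where "c \<in> N" and c: "\<nu> c \<noteq> (\<mu> \<circ> transpose x y) c"
    using assignment_eqI[OF \<nu> assignment_swap[OF assignment agents(1,2)]] assms(3) by blast
  then have "c \<noteq> y"
    using \<open>\<nu> y = \<mu> x\<close> by auto
  show thesis
  proof (cases "c = x")
    case False
    then have "\<nu> c \<noteq> \<mu> c"
      using c \<open>c \<noteq> y\<close> by simp
    then show thesis
      using that changed_agent_prefers_mu[OF \<nu>] \<open>c \<in> N\<close> \<open>c \<noteq> y\<close> False by blast
  next
    case True
    obtain d where "d \<in> N" and d: "\<nu> d = \<mu> y"
      using assignment_holder[OF \<nu> assignment_in[OF assignment agents(2)]] .
    have "d \<noteq> x"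
      using c d True by auto
    moreover have "d \<noteq> y"
      using d \<open>\<nu> y = \<mu> x\<close> assignment_eq_iff[OF assignment agents(1,2)] agents(3) by auto
    moreover have "\<nu> d \<noteq> \<mu> d"
      using d assignment_eq_iff[OF assignment \<open>d \<in> N\<close> agents(2)] \<open>d \<noteq> y\<close> by simp
    ultimately show thesis
      using that changed_agent_prefers_mu[OF \<nu>] \<open>d \<in> N\<close> by blast
  qed
qed

lemma some_agent_prefers_mu:
  assumes \<nu>: "\<nu> \<in> assignments N H" and "y \<notin> strict_pref_agents N P \<nu> \<mu>" and "\<nu> \<noteq> \<mu>"
  shows "strict_pref_agents N P \<mu> \<nu> \<noteq> {}"
proof -
  obtain c where "c \<in> N" and c: "\<nu> c \<noteq> \<mu> c"
    using assignment_eqI[OF \<nu> assignment] assms(3) by blast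
  show ?thesis
  proof (cases "c = y")
    case False
    then show ?thesis
      using changed_agent_prefers_mu[OF \<nu>] \<open>c \<in> N\<close> c by blast
  next
    case True
    have "\<nu> y \<noteq> top_house x"
      using assms(2) top_house_best[OF agents(2)] y_house_second_best(1) same_top agents(2)
      unfolding strict_pref_agents_def by auto
    then have "(\<mu> y, \<nu> y) \<in> P y"
      using y_house_second_best(2) assignment_in[OF \<nu> agents(2)] c True by blast
    then show ?thesis
      using agents(2) unfolding strict_pref_agents_def by blast
  qed
qed

lemma others_not_pop_rel:
  assumes \<nu>: "\<nu> \<in> assignments N H" and "\<nu> \<noteq> \<mu>" and "\<nu> \<noteq> \<mu> \<circ> transpose x y"
  shows "(\<nu>, \<mu>) \<notin> pop_rel N H P"
proof -
  have fin: "finite (strict_pref_agents N P \<alpha> \<beta>)" for \<alpha> \<beta>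
    using finite_strict_pref_agents[OF finite_agents] .
  have "card (strict_pref_agents N P \<nu> \<mu>) < card (strict_pref_agents N P \<mu> \<nu>)"
  proof (cases "y \<in> strict_pref_agents N P \<nu> \<mu>")
    case True
    then have "\<nu> y = \<mu> x"
      using y_prefers_only_top[OF \<nu>] top_for_others agents by simp
    then have "\<nu> x \<noteq> \<mu> x"
      using assignment_eq_iff[OF \<nu> agents(1,2)] agents(3) by simp
    then have "x \<in> strict_pref_agents N P \<mu> \<nu>"
      using changed_agent_prefers_mu[OF \<nu>] agents by blast
    moreover obtain c where "c \<in> strict_pref_agents N P \<mu> \<nu>" "c \<noteq> x"
      using another_agent_prefers_mu[OF \<nu> \<open>\<nu> y = \<mu> x\<close> assms(3)] .
    ultimately have "card {x, c} \<le> card (strict_pref_agents N P \<mu> \<nu>)"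
      by (intro card_mono[OF fin]) blast
    moreover have "card (strict_pref_agents N P \<nu> \<mu>) \<le> 1"
      using card_mono[OF _ only_y_prefers_other] by fastforce
    ultimately show ?thesis
      using \<open>c \<noteq> x\<close> by simp
  next
    case False
    then have "strict_pref_agents N P \<nu> \<mu> = {}"
      using only_y_prefers_other by blast
    moreover have "strict_pref_agents N P \<mu> \<nu> \<noteq> {}"
      using some_agent_prefers_mu[OF \<nu> False assms(2)] .
    ultimately show ?thesis
      by (simp add: fin card_gt_0_iff)
  qed
  then show ?thesis
    using pop_rel_iff_card by simp
qed

end

context housing_market
begin

lemma card_TC_2_imp:
  assumes "card (TC N H P) = 2"
  shows "\<exists>x\<in>N. \<exists>y\<in>N. \<exists>p q. x \<noteq> y \<and> top_house x = p \<and> top_house y = p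
    \<and> inj_on top_house (N - {y}) \<and> second_house x = q \<and> second_house y = q
    \<and> (\<forall>z\<in>N. top_house z \<noteq> q)"
proof -
  obtain \<mu> \<mu>' where "TC N H P = {\<mu>, \<mu>'}" "\<mu> \<noteq> \<mu>'"
    using assms card_2_iff by metis
  then interpret two_top_cycle N H P \<mu> \<mu>'
    by unfold_locales
  obtain a b where a: "a \<in> N" and b: "b \<in> N" and "a \<noteq> b" and \<mu>': "\<mu>' = \<mu> \<circ> transpose a b"
    and \<mu>b: "\<mu> b = top_house a" and same_top: "top_house b = top_house a"
    and others_top: "\<forall>z\<in>N - {a}. \<mu> z = top_house z"
    by (rule pair_is_top_swap)
  have top_eq: "top_house z = \<mu>' z" if "z \<in> N - {b}" for z
    using that \<mu>' \<mu>b others_top by (cases "z = a") auto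
  have second_a: "second_house a = \<mu> a"
    using second_house_eq_assigned[OF a b \<open>a \<noteq> b\<close> \<mu>b] .
  have second_b: "second_house b = \<mu> a"
    using two_top_cycle.second_house_eq_assigned[OF swapped b a \<open>a \<noteq> b\<close>[symmetric]] \<mu>' \<mu>b same_top
    by simp
  have "inj_on top_house (N - {b}) \<longleftrightarrow> inj_on \<mu>' (N - {b})"
    by (rule inj_on_cong) (rule top_eq)
  then have "inj_on top_house (N - {b})"
    using assignments(2) unfolding assignments_def by (blast dest: bij_betw_imp_inj_on inj_on_subset)
  moreover have "top_house z \<noteq> \<mu> a" if "z \<in> N" for z
  proof (cases "z = b")
    case True
    then show ?thesis
      using \<mu>b same_top assignment_eq_iff[OF assignments(1) a b] \<open>a \<noteq> b\<close> by simp
  next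
    case False
    then show ?thesis
      using top_eq[of z] that \<mu>' assignment_eq_iff[OF assignments(2) that b] by simp
  qed
  ultimately show ?thesis
    using a b \<open>a \<noteq> b\<close> same_top second_a second_b by metis
qed

lemma card_TC_2_if:
  assumes x: "x \<in> N" and y: "y \<in> N" and "x \<noteq> y" and same_top: "top_house x = top_house y"
    and inj: "inj_on top_house (N - {y})" and same_second: "second_house x = second_house y"
    and second_not_top: "\<forall>z\<in>N. top_house z \<noteq> second_house y"
  shows "card (TC N H P) = 2"
proof -
  define \<mu> where "\<mu> = restrict (\<lambda>z. if z = y then second_house y else top_house z) N"
  have second_y: "second_house y \<in> H - {top_house y}"
    using second_house(1)[OF y x] \<open>x \<noteq> y\<close> by blast
  have \<mu>: "\<mu> \<in> assignments N H"
  proof (rule assignmentsI[OF finite_houses card_agents_houses])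
    show "\<mu> \<in> extensional N"
      unfolding \<mu>_def by simp
    show "\<mu> ` N \<subseteq> H"
      using second_y top_house_in unfolding \<mu>_def by auto
    have "inj_on \<mu> (N - {y}) \<longleftrightarrow> inj_on top_house (N - {y})"
      by (rule inj_on_cong) (simp add: \<mu>_def)
    moreover have "\<mu> y \<notin> \<mu> ` (N - {y})"
      using second_not_top y unfolding \<mu>_def by auto
    ultimately show "inj_on \<mu> N"
      using inj y inj_on_insert[of \<mu> y "N - {y}"] by (simp add: insert_absorb)
  qed
  interpret \<mu>: almost_top_assignment N H P \<mu> x y
    using \<mu> x y \<open>x \<noteq> y\<close> same_top by unfold_locales (auto simp: \<mu>_def)
  interpret \<mu>': almost_top_assignment N H P "\<mu> \<circ> transpose x y" y x
    using assignment_swap[OF \<mu> x y] x y \<open>x \<noteq> y\<close> same_top same_second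
    by unfold_locales (auto simp: \<mu>_def transpose_def)
  have swap_back: "\<mu> \<circ> transpose x y \<circ> transpose y x = \<mu>"
    by (simp add: comp_assoc transpose_commute[of y x])
  have "TC N H P = {\<mu>, \<mu> \<circ> transpose x y}"
  proof (rule TC_eqI)
    show "{\<mu>, \<mu> \<circ> transpose x y} \<subseteq> assignments N H"
      using \<mu> assignment_swap[OF \<mu> x y] by blast
    show "(\<delta>, \<nu>) \<in> pop_rel N H P" if "\<delta> \<in> {\<mu>, \<mu> \<circ> transpose x y}" "\<nu> \<in> assignments N H" for \<delta> \<nu>
      using that \<mu>.pop_rel_to_all \<mu>'.pop_rel_to_all by blast
    show "(\<nu>, \<delta>) \<notin> pop_rel N H P"
      if "\<delta> \<in> {\<mu>, \<mu> \<circ> transpose x y}" "\<nu> \<in> assignments N H - {\<mu>, \<mu> \<circ> transpose x y}" for \<delta> \<nu>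
      using that \<mu>.others_not_pop_rel \<mu>'.others_not_pop_rel swap_back by auto
  qed simp
  moreover have "\<mu> \<noteq> \<mu> \<circ> transpose x y"
  proof
    assume "\<mu> = \<mu> \<circ> transpose x y"
    then have "\<mu> x = \<mu> y"
      by (metis comp_apply transpose_apply_first)
    then show False
      using second_y same_top x y \<open>x \<noteq> y\<close> unfolding \<mu>_def by simp
  qed
  ultimately show ?thesis
    by simp
qed

lemma card_TC_2_iff:
  "card (TC N H P) = 2 \<longleftrightarrow>
    (\<exists>x\<in>N. \<exists>y\<in>N. \<exists>p q. x \<noteq> y \<and> top_house x = p \<and> top_house y = p
      \<and> inj_on top_house (N - {y}) \<and> second_house x = q \<and> second_house y = q
      \<and> (\<forall>z\<in>N. top_house z \<noteq> q))"
  using card_TC_2_imp card_TC_2_if by metis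

end

theorem lemmaB3:
  fixes N :: "'a set" and H :: "'h set" and P :: "'a \<Rightarrow> ('h \<times> 'h) set"
  assumes "finite N" and "finite H" and "card N = card H"
    and "is_profile N H P"
  shows "(card (TC N H P) = 2 \<longleftrightarrow>
           (\<exists>x\<in>N. \<exists>y\<in>N. \<exists>p q. x \<noteq> y
              \<and> first_choice H (P x) = p \<and> first_choice H (P y) = p
              \<and> inj_on (\<lambda>z. first_choice H (P z)) (N - {y})
              \<and> second_choice H (P x) = q \<and> second_choice H (P y) = q
              \<and> (\<forall>z\<in>N. first_choice H (P z) \<noteq> q)))
       \<and> (card (BC N H P) = 2 \<longleftrightarrow>
           (\<exists>x\<in>N. \<exists>y\<in>N. \<exists>p q. x \<noteq> y
              \<and> last_choice H (P x) = p \<and> last_choice H (P y) = p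
              \<and> inj_on (\<lambda>z. last_choice H (P z)) (N - {y})
              \<and> second_last_choice H (P x) = q \<and> second_last_choice H (P y) = q
              \<and> (\<forall>z\<in>N. last_choice H (P z) \<noteq> q)))"
proof -
  interpret top: housing_market N H P
    using assms by unfold_locales
  interpret bottom: housing_market N H "\<lambda>x. (P x)\<inverse>"
    using assms is_profile_converse by unfold_locales
  show ?thesis
    unfolding BC_eq_TC_converse last_choice_def second_last_choice_def
    using top.card_TC_2_iff bottom.card_TC_2_iff by blast
qed

end
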